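(* Suppose Assumption 1 holds. Let $J\subseteq\{1,\dots,q\}$ with $|J|\le q^*$ and $J_0\setminus J\neq\emptyset$, and let $l=|J_0\setminus J|$. Then $$\|\Pi_{J_0}f\|^2-\|\Pi_Jf\|^2=\|f-\Pi_Jf\|^2\ge(1-\rho_{q^*}^2)\kappa_l.$$
   Context: Let $q\ge1$ and let $(Y,X)$ be a pair of random variables with $X=(X_1,\dots,X_q)^T$, each $X_j$ real-valued, and $Y=\sum_{j=1}^q f_j(X_j)+\epsilon$, where $f_j\in L^2(\mathbb P^{X_j})$, $\mathbb E[f_j(X_j)]=0$ for $j=1,\dots,q-1$, and $\epsilon$ is a centered Gaussian variable with variance $\sigma^2$, independent of $X$. Write $f(x)=\sum_{j=1}^qf_j(x_j)$. The space $L^2(\mathbb P^X)$ carries the inner product $\langle g,h\rangle=\mathbb E[g(X)h(X)]$ and norm $\|g\|=\langle g,g\rangle^{1/2}$. Let $H_q=L^2(\mathbb P^{X_q})$ and $H_j=\{h\in L^2(\mathbb P^{X_j}):\mathbb E[h(X_j)]=0\}$ for $j<q$, viewed as subspaces of $L^2(\mathbb P^X)$ via $x\mapsto h(x_j)$; for $J\subseteq\{1,\dots,q\}$ let $H_J=\sum_{j\in J}H_j$ (with $H_\emptyset=\{0\}$). Under Assumption 1 the spaces $H_J$ with $|J|\le 2q^*$ are closed, and $\Pi_J$ denotes the orthogonal projection of $L^2(\mathbb P^X)$ onto $H_J$. Let $J_0=\{j:\|f_j\|>0\}$, $s=|J_0|$, and let $q^*$ be an integer with $s\le q^*$. Let $\rho_{q^*}$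 be the supremum of $\langle h_1,h_2\rangle/(\|h_1\|\|h_2\|)$ over all nonzero $h_1\in H_{J_1}$, $h_2\in H_{J_2}$ and all $J_1,J_2\subseteq\{1,\dots,q\}$ with $J_1\cap J_2=\emptyset$ and $|J_1|,|J_2|\le q^*$. Assumption 1 is the condition $\rho_{q^*}<1$. For $1\le l\le s$, $\kappa_l=\min_{J'\subseteq J_0,|J'|=l}\|\sum_{j\in J'}f_j\|^2$. *)

theory Defs
  imports "HOL-Probability.Probability"
begin

text \<open>Random variables live on a probability space M. A function of X is represented
 by the random variable on M it induces; L2(P^X) inner product = integral over M.\<close>

definition ip :: "'a measure \<Rightarrow> ('a \<Rightarrow> real) \<Rightarrow> ('a \<Rightarrow> real) \<Rightarrow> real" where
  "ip M g h = integral\<^sup>L M (\<lambda>\<omega>. g \<omega> * h \<omega>)"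

definition nrm :: "'a measure \<Rightarrow> ('a \<Rightarrow> real) \<Rightarrow> real" where
  "nrm M g = sqrt (ip M g g)"

definition Hj :: "'a measure \<Rightarrow> nat \<Rightarrow> (nat \<Rightarrow> 'a \<Rightarrow> real) \<Rightarrow> nat \<Rightarrow> ('a \<Rightarrow> real) set" where
  "Hj M q X j = {g. \<exists>h. h \<in> borel_measurable borel \<and> g = (\<lambda>\<omega>. h (X j \<omega>))
      \<and> integrable M (\<lambda>\<omega>. (h (X j \<omega>))\<^sup>2)
      \<and> (j < q \<longrightarrow> integral\<^sup>L M (\<lambda>\<omega>. h (X j \<omega>)) = 0)}"

definition HJ :: "'a measure \<Rightarrow> nat \<Rightarrow> (nat \<Rightarrow> 'a \<Rightarrow> real) \<Rightarrow> nat set \<Rightarrow> ('a \<Rightarrow> real) set" where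
  "HJ M q X J = {g. \<exists>G. (\<forall>j\<in>J. G j \<in> Hj M q X j) \<and> g = (\<lambda>\<omega>. \<Sum>j\<in>J. G j \<omega>)}"

definition proj :: "'a measure \<Rightarrow> nat \<Rightarrow> (nat \<Rightarrow> 'a \<Rightarrow> real) \<Rightarrow> nat set \<Rightarrow> ('a \<Rightarrow> real) \<Rightarrow> ('a \<Rightarrow> real)" where
  "proj M q X J f = (SOME g. g \<in> HJ M q X J \<and>
      (\<forall>h\<in>HJ M q X J. ip M (\<lambda>\<omega>. f \<omega> - g \<omega>) h = 0))"

definition rho :: "'a measure \<Rightarrow> nat \<Rightarrow> (nat \<Rightarrow> 'a \<Rightarrow> real) \<Rightarrow> nat \<Rightarrow> real" where
  "rho M q X qs = (let S = {ip M h1 h2 / (nrm M h1 * nrm M h2) | J1 J2 h1 h2.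
       J1 \<subseteq> {1..q} \<and> J2 \<subseteq> {1..q} \<and> J1 \<inter> J2 = {} \<and> card J1 \<le> qs \<and> card J2 \<le> qs \<and>
       h1 \<in> HJ M q X J1 \<and> h2 \<in> HJ M q X J2 \<and> nrm M h1 > 0 \<and> nrm M h2 > 0}
     in if S = {} then 0 else Sup S)"

definition J0 :: "'a measure \<Rightarrow> nat \<Rightarrow> (nat \<Rightarrow> 'a \<Rightarrow> real) \<Rightarrow> (nat \<Rightarrow> real \<Rightarrow> real) \<Rightarrow> nat set" where
  "J0 M q X fj = {j \<in> {1..q}. nrm M (\<lambda>\<omega>. fj j (X j \<omega>)) > 0}"

definition kappa :: "'a measure \<Rightarrow> nat \<Rightarrow> (nat \<Rightarrow> 'a \<Rightarrow> real) \<Rightarrow> (nat \<Rightarrow> real \<Rightarrow> real) \<Rightarrow> nat \<Rightarrow> real" where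
  "kappa M q X fj l = Min {(nrm M (\<lambda>\<omega>. \<Sum>j\<in>J'. fj j (X j \<omega>)))\<^sup>2 | J'.
       J' \<subseteq> J0 M q X fj \<and> card J' = l}"

end

theory Submission
  imports Defs
begin

text \<open>
  (1) Elementary L2 geometry: bilinearity of ip, the Cauchy-Schwarz inequality
      (via a discriminant argument), the parallelogram law and Pythagoras.
  (2) Projection theorem: on every subspace V that is complete for the
      squared distance dist2, the distance to f is minimised, and the minimiser
      g satisfies f - g \<perp> V.  Writing
      f = u + c + z with u in H_{J0-J}, c in H_J and z null, the residual
      e = f - proj_J f satisfies |e|^2 = |u|^2 - <Q,u> with Q = proj_J f - c,
      and the angle bound gives <Q,u> \<le> rho^2 |u|^2; finally |u|^2 \<ge> kappa_l.
\<close>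

text \<open>A quadratic polynomial in t that is nonnegative everywhere has a
  nonpositive discriminant; this is the core of Cauchy-Schwarz and of the
  variational characterisation of projections.\<close>
lemma nonneg_quadratic_discriminant:
  fixes a b c :: real
  assumes nonneg: "\<And>t. 0 \<le> a - 2*t*b + t\<^sup>2*c"
  shows "b\<^sup>2 \<le> a*c"
proof -
  have a0: "0 \<le> a" using nonneg[of 0] by simp
  show ?thesis
  proof (cases "c > 0")
    case True
    have "0 \<le> a - 2*(b/c)*b + (b/c)\<^sup>2*c" by (rule nonneg)
    also have "\<dots> = a - b\<^sup>2/c" using True by (simp add: power2_eq_square field_simps)
    finally show ?thesis using True by (simp add: field_simps)
  next
    case False
    have "b = 0"
    proof (rule ccontr)
      assume b: "b \<noteq> 0"
      have "0 \<le> a - 2*((a+1)/(2*b))*b + ((a+1)/(2*b))\<^sup>2*c" by (rule nonneg)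
      also have "\<dots> \<le> a - 2*((a+1)/(2*b))*b"
        using False by (simp add: mult_nonneg_nonpos)
      also have "\<dots> = -1" using b by (simp add: field_simps)
      finally show False by simp
    qed
    moreover have "c \<ge> 0"
    proof (rule ccontr)
      assume c: "\<not> c \<ge> 0"
      have "0 \<le> a + t\<^sup>2*c" for t using nonneg[of t] \<open>b = 0\<close> by simp
      from this[of "sqrt ((a+1)/(-c))"] c a0 show False by (simp add: field_simps)
    qed
    ultimately show ?thesis using a0 by simp
  qed
qed

lemma two_mult_le_sum_squares: "2 * \<bar>a::real\<bar> * \<bar>b\<bar> \<le> a\<^sup>2 + b\<^sup>2"
proof -
  have "0 \<le> (\<bar>a\<bar> - \<bar>b\<bar>)\<^sup>2" by simp
  then show ?thesis by (simp add: power2_diff)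
qed

lemma square_sum_le: "((a::real) + b)\<^sup>2 \<le> 2*a\<^sup>2 + 2*b\<^sup>2"
proof -
  have "0 \<le> (a - b)\<^sup>2" by simp
  then show ?thesis by (simp add: power2_diff power2_sum)
qed

section \<open>The inner product of square-integrable random variables\<close>

definition sq_int :: "'a measure \<Rightarrow> ('a \<Rightarrow> real) \<Rightarrow> bool" where
  "sq_int M g \<longleftrightarrow> g \<in> borel_measurable M \<and> integrable M (\<lambda>x. (g x)\<^sup>2)"

definition dist2 :: "'a measure \<Rightarrow> ('a \<Rightarrow> real) \<Rightarrow> ('a \<Rightarrow> real) \<Rightarrow> real" where
  "dist2 M g h = ip M (\<lambda>x. g x - h x) (\<lambda>x. g x - h x)"

lemma ip_sym: "ip M g h = ip M h g"
  unfolding ip_def by (simp add: mult.commute)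

lemma ip_scale_left: "ip M (\<lambda>x. c * g x) h = c * ip M g h"
  unfolding ip_def by (simp add: mult.assoc)

lemma ip_scale_right: "ip M g (\<lambda>x. c * h x) = c * ip M g h"
  unfolding ip_def by (simp add: mult.left_commute)

lemma ip_self_nonneg: "0 \<le> ip M g g"
  unfolding ip_def by (rule Bochner_Integration.integral_nonneg_AE) auto

lemma nrm_sq: "(nrm M g)\<^sup>2 = ip M g g"
  unfolding nrm_def using ip_self_nonneg by simp

lemma nrm_nonneg: "0 \<le> nrm M g"
  unfolding nrm_def using ip_self_nonneg by simp

lemma nrm_uminus: "nrm M (\<lambda>x. - g x) = nrm M g"
  unfolding nrm_def ip_def by simp

lemma dist2_nonneg: "0 \<le> dist2 M g h"
  unfolding dist2_def by (rule ip_self_nonneg)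

context prob_space
begin

lemma sq_int_integrable: "sq_int M g \<Longrightarrow> integrable M g"
  unfolding sq_int_def by (auto intro: square_integrable_imp_integrable)

lemma sq_int_mult_integrable:
  assumes "sq_int M g" "sq_int M h"
  shows "integrable M (\<lambda>x. g x * h x)"
proof (rule Bochner_Integration.integrable_bound[of _ "\<lambda>x. (g x)\<^sup>2 + (h x)\<^sup>2"])
  show "integrable M (\<lambda>x. (g x)\<^sup>2 + (h x)\<^sup>2)" using assms unfolding sq_int_def by auto
  show "(\<lambda>x. g x * h x) \<in> borel_measurable M" using assms unfolding sq_int_def by auto
  have "norm (a * b) \<le> norm (a\<^sup>2 + b\<^sup>2)" for a b :: real
  proof -
    have "norm (a * b) = \<bar>a\<bar> * \<bar>b\<bar>" by (simp add: abs_mult)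
    moreover have "0 \<le> \<bar>a\<bar> * \<bar>b\<bar>" by simp
    ultimately show ?thesis using two_mult_le_sum_squares[of a b] by simp
  qed
  then show "AE x in M. norm (g x * h x) \<le> norm ((g x)\<^sup>2 + (h x)\<^sup>2)" by simp
qed

lemma sq_int_add:
  assumes "sq_int M g" "sq_int M h"
  shows "sq_int M (\<lambda>x. g x + h x)"
  unfolding sq_int_def
proof
  show "(\<lambda>x. g x + h x) \<in> borel_measurable M" using assms unfolding sq_int_def by auto
  show "integrable M (\<lambda>x. (g x + h x)\<^sup>2)"
  proof (rule Bochner_Integration.integrable_bound[of _ "\<lambda>x. 2*(g x)\<^sup>2 + 2*(h x)\<^sup>2"])
    show "integrable M (\<lambda>x. 2*(g x)\<^sup>2 + 2*(h x)\<^sup>2)" using assms unfolding sq_int_def by auto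
    show "(\<lambda>x. (g x + h x)\<^sup>2) \<in> borel_measurable M" using assms unfolding sq_int_def by auto
    show "AE x in M. norm ((g x + h x)\<^sup>2) \<le> norm (2*(g x)\<^sup>2 + 2*(h x)\<^sup>2)"
      using square_sum_le by simp
  qed
qed

lemma sq_int_scale: "sq_int M g \<Longrightarrow> sq_int M (\<lambda>x. c * g x)"
  unfolding sq_int_def by (auto simp: power_mult_distrib)

lemma sq_int_diff:
  assumes "sq_int M g" "sq_int M h"
  shows "sq_int M (\<lambda>x. g x - h x)"
  using sq_int_add[OF assms(1) sq_int_scale[OF assms(2), of "-1"]] by simp

lemma sq_int_sum:
  assumes "\<And>i. i \<in> I \<Longrightarrow> sq_int M (g i)"
  shows "sq_int M (\<lambda>x. \<Sum>i\<in>I. g i x)"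
  using assms
proof (induction I rule: infinite_finite_induct)
  case (insert i F)
  then show ?case using sq_int_add[of "g i" "\<lambda>x. \<Sum>i\<in>F. g i x"] by simp
qed (simp_all add: sq_int_def)

lemma ip_add_left:
  assumes "sq_int M g" "sq_int M h" "sq_int M k"
  shows "ip M (\<lambda>x. g x + h x) k = ip M g k + ip M h k"
  unfolding ip_def using sq_int_mult_integrable[OF assms(1,3)] sq_int_mult_integrable[OF assms(2,3)]
  by (simp add: distrib_right)

lemma ip_diff_left:
  assumes "sq_int M g" "sq_int M h" "sq_int M k"
  shows "ip M (\<lambda>x. g x - h x) k = ip M g k - ip M h k"
  unfolding ip_def using sq_int_mult_integrable[OF assms(1,3)] sq_int_mult_integrable[OF assms(2,3)]
  by (simp add: left_diff_distrib)

lemma ip_add_right: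
  assumes "sq_int M g" "sq_int M h" "sq_int M k"
  shows "ip M k (\<lambda>x. g x + h x) = ip M k g + ip M k h"
  using ip_add_left[OF assms] by (simp add: ip_sym)

lemma ip_diff_right:
  assumes "sq_int M g" "sq_int M h" "sq_int M k"
  shows "ip M k (\<lambda>x. g x - h x) = ip M k g - ip M k h"
  using ip_diff_left[OF assms] by (simp add: ip_sym)

lemma ip_add_self:
  assumes "sq_int M g" "sq_int M h"
  shows "ip M (\<lambda>x. g x + h x) (\<lambda>x. g x + h x) = ip M g g + 2 * ip M g h + ip M h h"
  using assms sq_int_add[OF assms] by (simp add: ip_add_left ip_add_right ip_sym[of M h g])

lemma ip_diff_scaled_self:
  assumes "sq_int M g" "sq_int M h"
  shows "ip M (\<lambda>x. g x - t * h x) (\<lambda>x. g x - t * h x)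
           = ip M g g - 2*t*ip M g h + t\<^sup>2 * ip M h h"
proof -
  have th: "sq_int M (\<lambda>x. t * h x)" by (rule sq_int_scale[OF assms(2)])
  show ?thesis
    using assms th sq_int_diff[OF assms(1) th]
    by (simp add: ip_diff_left ip_diff_right ip_scale_left ip_scale_right ip_sym[of M h g]
        power2_eq_square algebra_simps)
qed

lemma cauchy_schwarz:
  assumes "sq_int M g" "sq_int M h"
  shows "(ip M g h)\<^sup>2 \<le> ip M g g * ip M h h"
proof (rule nonneg_quadratic_discriminant)
  fix t
  show "0 \<le> ip M g g - 2*t*ip M g h + t\<^sup>2 * ip M h h"
    using ip_self_nonneg ip_diff_scaled_self[OF assms] by metis
qed

lemma abs_ip_le:
  assumes "sq_int M g" "sq_int M h"
  shows "\<bar>ip M g h\<bar> \<le> nrm M g * nrm M h"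
proof -
  have "(ip M g h)\<^sup>2 \<le> (nrm M g * nrm M h)\<^sup>2"
    using cauchy_schwarz[OF assms] by (simp add: power_mult_distrib nrm_sq)
  then have "\<bar>ip M g h\<bar> \<le> \<bar>nrm M g * nrm M h\<bar>" by (simp only: abs_le_square_iff)
  then show ?thesis using nrm_nonneg[of M g] nrm_nonneg[of M h] by simp
qed

lemma ip_null_right:
  assumes "sq_int M g" "sq_int M h" "ip M h h = 0"
  shows "ip M g h = 0"
  using cauchy_schwarz[OF assms(1,2)] assms(3) by simp

lemma nrm_triangle:
  assumes "sq_int M g" "sq_int M h"
  shows "nrm M (\<lambda>x. g x + h x) \<le> nrm M g + nrm M h"
proof -
  have "(nrm M (\<lambda>x. g x + h x))\<^sup>2 = ip M g g + 2 * ip M g h + ip M h h"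
    using ip_add_self[OF assms] by (simp add: nrm_sq)
  also have "\<dots> \<le> (nrm M g)\<^sup>2 + 2 * (nrm M g * nrm M h) + (nrm M h)\<^sup>2"
    using abs_ip_le[OF assms] by (simp add: nrm_sq)
  also have "\<dots> = (nrm M g + nrm M h)\<^sup>2" by (simp add: power2_sum)
  finally show ?thesis using nrm_nonneg[of M g] nrm_nonneg[of M h]
    by (meson add_nonneg_nonneg power2_le_imp_le)
qed

lemma sqrt_dist2_triangle:
  assumes "sq_int M a" "sq_int M b" "sq_int M c"
  shows "sqrt (dist2 M a c) \<le> sqrt (dist2 M a b) + sqrt (dist2 M b c)"
proof -
  have "(\<lambda>x. a x - c x) = (\<lambda>x. (a x - b x) + (b x - c x))" by auto
  then have "sqrt (dist2 M a c) = nrm M (\<lambda>x. (a x - b x) + (b x - c x))"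
    unfolding dist2_def nrm_def by simp
  also have "\<dots> \<le> nrm M (\<lambda>x. a x - b x) + nrm M (\<lambda>x. b x - c x)"
    by (rule nrm_triangle[OF sq_int_diff[OF assms(1,2)] sq_int_diff[OF assms(2,3)]])
  finally show ?thesis unfolding dist2_def nrm_def .
qed

lemma dist2_triangle:
  assumes "sq_int M a" "sq_int M b" "sq_int M c"
  shows "dist2 M a c \<le> 2 * dist2 M a b + 2 * dist2 M b c"
proof -
  have "dist2 M a c \<le> (sqrt (dist2 M a b) + sqrt (dist2 M b c))\<^sup>2"
    using sqrt_dist2_triangle[OF assms] dist2_nonneg
    by (metis power_mono real_sqrt_ge_zero real_sqrt_pow2)
  also have "\<dots> \<le> 2 * dist2 M a b + 2 * dist2 M b c"
    using square_sum_le dist2_nonneg by (metis real_sqrt_pow2)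
  finally show ?thesis .
qed

lemma pythagoras:
  assumes "sq_int M f" "sq_int M g" "ip M (\<lambda>x. f x - g x) g = 0"
  shows "ip M (\<lambda>x. f x - g x) (\<lambda>x. f x - g x) = ip M f f - ip M g g"
proof -
  have fg: "sq_int M (\<lambda>x. f x - g x)" using sq_int_diff[OF assms(1,2)] .
  have "ip M (\<lambda>x. f x - g x) (\<lambda>x. f x - g x) = ip M (\<lambda>x. f x - g x) f"
    using ip_diff_right[OF assms(1,2) fg] assms(3) by simp
  also have "\<dots> = ip M f f - ip M g g"
    using ip_diff_left[OF assms(1,2,1)] ip_diff_left[OF assms(1,2,2)] assms(3) ip_sym[of M g f]
    by simp
  finally show ?thesis .
qed

lemma parallelogram:
  assumes "sq_int M f" "sq_int M a" "sq_int M b"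
  shows "dist2 M a b = 2 * dist2 M f a + 2 * dist2 M f b - 4 * dist2 M f (\<lambda>x. (1/2) * (a x + b x))"
proof -
  have i1: "integrable M (\<lambda>x. (f x - a x) * (f x - a x))"
    using sq_int_mult_integrable[OF sq_int_diff[OF assms(1,2)] sq_int_diff[OF assms(1,2)]] .
  have i2: "integrable M (\<lambda>x. (f x - b x) * (f x - b x))"
    using sq_int_mult_integrable[OF sq_int_diff[OF assms(1,3)] sq_int_diff[OF assms(1,3)]] .
  have mid: "sq_int M (\<lambda>x. (1/2) * (a x + b x))" using sq_int_scale[OF sq_int_add[OF assms(2,3)]] .
  have i3: "integrable M (\<lambda>x. (f x - (1/2) * (a x + b x)) * (f x - (1/2) * (a x + b x)))"
    using sq_int_mult_integrable[OF sq_int_diff[OF assms(1) mid] sq_int_diff[OF assms(1) mid]] .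
  have "dist2 M a b = integral\<^sup>L M (\<lambda>x. 2 * ((f x - a x) * (f x - a x)) + 2 * ((f x - b x) * (f x - b x))
       - 4 * ((f x - (1/2) * (a x + b x)) * (f x - (1/2) * (a x + b x))))"
    unfolding dist2_def ip_def by (rule Bochner_Integration.integral_cong) (auto simp: algebra_simps)
  also have "\<dots> = 2 * dist2 M f a + 2 * dist2 M f b - 4 * dist2 M f (\<lambda>x. (1/2) * (a x + b x))"
    unfolding dist2_def ip_def using i1 i2 i3 by simp
  finally show ?thesis .
qed

lemma abs_integral_le_nrm:
  assumes "sq_int M w"
  shows "\<bar>integral\<^sup>L M w\<bar> \<le> integral\<^sup>L M (\<lambda>x. \<bar>w x\<bar>)"
    and "integral\<^sup>L M (\<lambda>x. \<bar>w x\<bar>) \<le> nrm M w"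
proof -
  show "\<bar>integral\<^sup>L M w\<bar> \<le> integral\<^sup>L M (\<lambda>x. \<bar>w x\<bar>)"
    using integral_norm_bound[of M w] by simp
  have s1: "sq_int M (\<lambda>x. \<bar>w x\<bar>)" using assms unfolding sq_int_def by auto
  have s2: "sq_int M (\<lambda>x. 1)" unfolding sq_int_def by auto
  have "(ip M (\<lambda>x. \<bar>w x\<bar>) (\<lambda>x. 1))\<^sup>2 \<le> ip M (\<lambda>x. \<bar>w x\<bar>) (\<lambda>x. \<bar>w x\<bar>) * ip M (\<lambda>x. 1) (\<lambda>x. 1)"
    by (rule cauchy_schwarz[OF s1 s2])
  also have "ip M (\<lambda>x. \<bar>w x\<bar>) (\<lambda>x. \<bar>w x\<bar>) = ip M w w" unfolding ip_def by (simp add: abs_mult_self_eq)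
  also have "ip M (\<lambda>x. 1) (\<lambda>x. 1) = 1" unfolding ip_def by (simp add: prob_space)
  finally show "integral\<^sup>L M (\<lambda>x. \<bar>w x\<bar>) \<le> nrm M w" unfolding ip_def nrm_def by (simp add: real_le_rsqrt)
qed


lemma ip_sum_null:
  assumes "finite I" "\<And>i. i \<in> I \<Longrightarrow> sq_int M (g i)" "\<And>i. i \<in> I \<Longrightarrow> ip M (g i) (g i) = 0"
  shows "ip M (\<lambda>x. \<Sum>i\<in>I. g i x) (\<lambda>x. \<Sum>i\<in>I. g i x) = 0"
  using assms
proof (induction I rule: finite_induct)
  case empty
  then show ?case by (simp add: ip_def)
next
  case (insert i F)
  let ?S = "\<lambda>x. \<Sum>i\<in>F. g i x"
  have gs: "sq_int M (g i)" and gg: "ip M (g i) (g i) = 0" using insert by auto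
  have Ss: "sq_int M ?S" using insert by (intro sq_int_sum) auto
  have SS: "ip M ?S ?S = 0" using insert by auto
  have "(\<lambda>x. \<Sum>i\<in>insert i F. g i x) = (\<lambda>x. g i x + ?S x)" using insert by simp
  then show ?case using ip_add_self[OF gs Ss] ip_null_right[OF gs Ss SS] SS gg by simp
qed

end

section \<open>Orthogonal projection onto complete subspaces\<close>

definition L2_subspace :: "'a measure \<Rightarrow> ('a \<Rightarrow> real) set \<Rightarrow> bool" where
  "L2_subspace M V \<longleftrightarrow> (\<forall>v\<in>V. sq_int M v) \<and> (\<lambda>x. 0) \<in> V
     \<and> (\<forall>g\<in>V. \<forall>h\<in>V. (\<lambda>x. g x + h x) \<in> V) \<and> (\<forall>g\<in>V. \<forall>c. (\<lambda>x. c * g x) \<in> V)"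

definition L2_Cauchy :: "'a measure \<Rightarrow> (nat \<Rightarrow> 'a \<Rightarrow> real) \<Rightarrow> bool" where
  "L2_Cauchy M u \<longleftrightarrow> (\<forall>e>0. \<exists>N. \<forall>m\<ge>N. \<forall>n\<ge>N. dist2 M (u m) (u n) < e)"

text \<open>Completeness of V with respect to the (semi)metric sqrt o dist2;
  this is how closedness of the spaces H_J enters (Assumption 1).\<close>
definition L2_complete :: "'a measure \<Rightarrow> ('a \<Rightarrow> real) set \<Rightarrow> bool" where
  "L2_complete M V \<longleftrightarrow>
     (\<forall>u. (\<forall>n. u n \<in> V) \<and> L2_Cauchy M u \<longrightarrow> (\<exists>v\<in>V. (\<lambda>n. dist2 M (u n) v) \<longlonglongrightarrow> 0))"

lemma L2_subspace_sq_int: "L2_subspace M V \<Longrightarrow> v \<in> V \<Longrightarrow> sq_int M v"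
  unfolding L2_subspace_def by blast

lemma L2_subspace_zero: "L2_subspace M V \<Longrightarrow> (\<lambda>x. 0) \<in> V"
  unfolding L2_subspace_def by blast

lemma L2_subspace_add: "L2_subspace M V \<Longrightarrow> g \<in> V \<Longrightarrow> h \<in> V \<Longrightarrow> (\<lambda>x. g x + h x) \<in> V"
  unfolding L2_subspace_def by blast

lemma L2_subspace_scale: "L2_subspace M V \<Longrightarrow> g \<in> V \<Longrightarrow> (\<lambda>x. c * g x) \<in> V"
  unfolding L2_subspace_def by blast

lemma L2_subspace_diff:
  assumes "L2_subspace M V" "g \<in> V" "h \<in> V"
  shows "(\<lambda>x. g x - h x) \<in> V"
  using L2_subspace_add[OF assms(1,2) L2_subspace_scale[OF assms(1,3), of "-1"]] by simp

lemma L2_Cauchy_dominated: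
  assumes C: "L2_Cauchy M u" and c: "c > 0"
    and dom: "\<And>m n. c * dist2 M (a m) (a n) \<le> dist2 M (u m) (u n)"
  shows "L2_Cauchy M a"
  unfolding L2_Cauchy_def
proof (intro allI impI)
  fix e :: real assume "e > 0"
  then obtain N where N: "\<forall>m\<ge>N. \<forall>n\<ge>N. dist2 M (u m) (u n) < c * e"
    using C c unfolding L2_Cauchy_def by (meson mult_pos_pos)
  have "dist2 M (a m) (a n) < e" if "m \<ge> N" "n \<ge> N" for m n
    using dom[of m n] N that c by (smt (verit) mult_less_cancel_left_pos)
  then show "\<exists>N. \<forall>m\<ge>N. \<forall>n\<ge>N. dist2 M (a m) (a n) < e" by blast
qed

context prob_space
begin

text \<open>Existence of a closest point: a minimising sequence is Cauchy by the
  parallelogram law, and its limit attains the infimum of the distances.\<close>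
lemma closest_point_exists:
  assumes V: "L2_subspace M V" "L2_complete M V" and f: "sq_int M f"
  shows "\<exists>g\<in>V. \<forall>h\<in>V. dist2 M f g \<le> dist2 M f h"
proof -
  have Vs: "\<And>v. v \<in> V \<Longrightarrow> sq_int M v" using V(1) by (rule L2_subspace_sq_int)
  define d where "d = (INF v\<in>V. dist2 M f v)"
  have Vne: "V \<noteq> {}" using L2_subspace_zero[OF V(1)] by blast
  have bdd: "bdd_below ((\<lambda>v. dist2 M f v) ` V)" by (rule bdd_belowI2[where m=0]) (rule dist2_nonneg)
  have d_le: "d \<le> dist2 M f v" if "v \<in> V" for v
    unfolding d_def by (rule cINF_lower[OF bdd that])
  have "\<exists>v\<in>V. dist2 M f v < d + 1/(Suc n)" for n
    using cINF_less_iff[OF Vne bdd, of "d + 1/(Suc n)"] Vne unfolding d_def by auto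
  then obtain v where vV: "\<And>n. v n \<in> V" and vd: "\<And>n. dist2 M f (v n) < d + 1/(Suc n)" by metis
  have vs: "sq_int M (v n)" for n using Vs vV by auto
  have close: "dist2 M (v m) (v n) \<le> 2/(Suc m) + 2/(Suc n)" for m n
  proof -
    have "(\<lambda>x. (1/2) * (v m x + v n x)) \<in> V"
      using V(1) vV by (intro L2_subspace_scale L2_subspace_add)
    then have "d \<le> dist2 M f (\<lambda>x. (1/2) * (v m x + v n x))" by (rule d_le)
    then show ?thesis using parallelogram[OF f vs vs, of m n] vd[of m] vd[of n] by simp
  qed
  have "L2_Cauchy M v" unfolding L2_Cauchy_def
  proof (intro allI impI)
    fix e :: real assume e: "e > 0"
    obtain N where N: "4 / e < real N" using reals_Archimedean2 by blast
    have "dist2 M (v m) (v n) < e" if "m \<ge> N" "n \<ge> N" for m n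
    proof -
      have "2/(Suc m) \<le> 2/(Suc N)" "2/(Suc n) \<le> 2/(Suc N)" using that by (auto intro!: divide_left_mono)
      moreover have "4/(Suc N) < e" using N e by (simp add: field_simps)
      ultimately show ?thesis using close[of m n] by linarith
    qed
    then show "\<exists>N. \<forall>m\<ge>N. \<forall>n\<ge>N. dist2 M (v m) (v n) < e" by blast
  qed
  then obtain g where gV: "g \<in> V" and lim: "(\<lambda>n. dist2 M (v n) g) \<longlonglongrightarrow> 0"
    using V(2) vV unfolding L2_complete_def by blast
  have "sqrt (dist2 M f g) \<le> sqrt d"
  proof (rule LIMSEQ_le)
    show "(\<lambda>n. sqrt (dist2 M f g)) \<longlonglongrightarrow> sqrt (dist2 M f g)" by simp
    have "(\<lambda>n. d + 1/(Suc n)) \<longlonglongrightarrow> d + 0"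
      by (intro tendsto_add tendsto_const LIMSEQ_Suc[OF lim_inverse_n'])
    from tendsto_add[OF tendsto_real_sqrt[OF this] tendsto_real_sqrt[OF lim]]
    show "(\<lambda>n. sqrt (d + 1/(Suc n)) + sqrt (dist2 M (v n) g)) \<longlonglongrightarrow> sqrt d" by simp
    have "sqrt (dist2 M f g) \<le> sqrt (d + 1/(Suc n)) + sqrt (dist2 M (v n) g)" for n
      using sqrt_dist2_triangle[OF f vs[of n] Vs[OF gV]]
        vd[of n] by (smt (verit) real_sqrt_le_mono)
    then show "\<exists>N. \<forall>n\<ge>N. sqrt (dist2 M f g) \<le> sqrt (d + 1/(Suc n)) + sqrt (dist2 M (v n) g)"
      by blast
  qed
  then have "dist2 M f g \<le> d" by simp
  then show ?thesis using gV d_le by force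
qed

text \<open>Variational characterisation: the closest point g makes f - g
  orthogonal to V (the quadratic t \<mapsto> |f - g - t h|^2 - |f - g|^2 is nonnegative).\<close>
lemma closest_point_orthogonal:
  assumes V: "L2_subspace M V" and f: "sq_int M f" and gV: "g \<in> V"
    and closest: "\<And>h. h \<in> V \<Longrightarrow> dist2 M f g \<le> dist2 M f h"
    and hV: "h \<in> V"
  shows "ip M (\<lambda>x. f x - g x) h = 0"
proof -
  have gs: "sq_int M g" and hs: "sq_int M h" using V gV hV by (auto intro: L2_subspace_sq_int)
  have es: "sq_int M (\<lambda>x. f x - g x)" using sq_int_diff[OF f gs] .
  have "(ip M (\<lambda>x. f x - g x) h)\<^sup>2 \<le> 0 * ip M h h"
  proof (rule nonneg_quadratic_discriminant)
    fix t
    have "(\<lambda>x. g x + t * h x) \<in> V" using V gV hV by (intro L2_subspace_add L2_subspace_scale)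
    then have "dist2 M f g \<le> dist2 M f (\<lambda>x. g x + t * h x)" by (rule closest)
    also have "dist2 M f (\<lambda>x. g x + t * h x) = ip M (\<lambda>x. (f x - g x) - t * h x) (\<lambda>x. (f x - g x) - t * h x)"
      unfolding dist2_def by (simp add: algebra_simps)
    also have "\<dots> = dist2 M f g - 2*t*ip M (\<lambda>x. f x - g x) h + t\<^sup>2 * ip M h h"
      using ip_diff_scaled_self[OF es hs, of t] unfolding dist2_def by simp
    finally show "0 \<le> 0 - 2*t*ip M (\<lambda>x. f x - g x) h + t\<^sup>2 * ip M h h" by simp
  qed
  then show ?thesis by simp
qed

lemma orthogonal_projection_exists:
  assumes "L2_subspace M V" "L2_complete M V" "sq_int M f"
  shows "\<exists>g\<in>V. \<forall>h\<in>V. ip M (\<lambda>x. f x - g x) h = 0"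
  using closest_point_exists[OF assms] closest_point_orthogonal[OF assms(1,3)] by blast

section \<open>L2 limits of Cauchy sequences\<close>

text \<open>An L2-Cauchy sequence is L1-Cauchy, so a subsequence converges a.e.\<close>
lemma L2_Cauchy_AE_subseq:
  assumes us: "\<And>n. sq_int M (u n)" and C: "L2_Cauchy M u"
  obtains r where "strict_mono r" "AE x in M. Cauchy (\<lambda>i. u (r i) x)"
proof (rule cauchy_L1_AE_cauchy_subseq)
  show "integrable M (u n)" for n using sq_int_integrable[OF us] .
  fix e :: real assume e: "e > 0"
  then obtain N where N: "\<forall>m\<ge>N. \<forall>n\<ge>N. dist2 M (u m) (u n) < e\<^sup>2"
    using C unfolding L2_Cauchy_def by (metis zero_less_power)
  have "LINT x|M. norm (u i x - u k x) < e" if "i \<ge> N" "k \<ge> N" for i k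
  proof -
    have "LINT x|M. norm (u i x - u k x) \<le> nrm M (\<lambda>x. u i x - u k x)"
      using abs_integral_le_nrm(2)[OF sq_int_diff[OF us us]] by simp
    also have "\<dots> < sqrt (e\<^sup>2)" using N that unfolding nrm_def dist2_def by (simp del: real_sqrt_abs)
    finally show ?thesis using e by simp
  qed
  then show "\<exists>N. \<forall>i\<ge>N. \<forall>k\<ge>N. LINT x|M. norm (u i x - u k x) < e" by blast
qed

text \<open>Fatou's lemma in L2 form: the squared distance to an a.e. limit of a
  sequence is at most the eventual bound on the squared distances.\<close>
lemma dist2_AE_limit_le:
  assumes gs: "sq_int M g" and ws: "\<And>i. sq_int M (w i)" and vm: "v \<in> borel_measurable M"
    and lim: "AE x in M. (\<lambda>i. w i x) \<longlonglongrightarrow> v x"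
    and bound: "eventually (\<lambda>i. dist2 M g (w i) \<le> e) sequentially"
  shows "integrable M (\<lambda>x. (g x - v x) * (g x - v x))" and "dist2 M g v \<le> e"
proof -
  have [measurable]: "g \<in> borel_measurable M" "\<And>i. w i \<in> borel_measurable M"
    using gs ws unfolding sq_int_def by auto
  have "(\<integral>\<^sup>+ x. ennreal ((g x - v x) * (g x - v x)) \<partial>M)
      = (\<integral>\<^sup>+ x. liminf (\<lambda>i. ennreal ((g x - w i x) * (g x - w i x))) \<partial>M)"
  proof (rule nn_integral_cong_AE)
    show "AE x in M. ennreal ((g x - v x) * (g x - v x))
                     = liminf (\<lambda>i. ennreal ((g x - w i x) * (g x - w i x)))"
      using lim
    proof (rule AE_mp, intro AE_I2 impI)
      fix x assume "(\<lambda>i. w i x) \<longlonglongrightarrow> v x"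
      then have "(\<lambda>i. ennreal ((g x - w i x) * (g x - w i x))) \<longlonglongrightarrow> ennreal ((g x - v x) * (g x - v x))"
        by (intro tendsto_ennrealI tendsto_mult tendsto_diff tendsto_const)
      then show "ennreal ((g x - v x) * (g x - v x)) = liminf (\<lambda>i. ennreal ((g x - w i x) * (g x - w i x)))"
        using lim_imp_Liminf[OF trivial_limit_sequentially] by metis
    qed
  qed
  also have "\<dots> \<le> liminf (\<lambda>i. (\<integral>\<^sup>+ x. ennreal ((g x - w i x) * (g x - w i x)) \<partial>M))"
    using vm by (intro nn_integral_liminf) measurable
  also have "\<dots> = liminf (\<lambda>i. ennreal (dist2 M g (w i)))"
  proof -
    have "(\<integral>\<^sup>+ x. ennreal ((g x - w i x) * (g x - w i x)) \<partial>M) = ennreal (dist2 M g (w i))" for i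
      unfolding dist2_def ip_def
      using sq_int_mult_integrable[OF sq_int_diff[OF gs ws] sq_int_diff[OF gs ws], of i i]
      by (intro nn_integral_eq_integral) auto
    then show ?thesis by simp
  qed
  also have "\<dots> \<le> limsup (\<lambda>i. ennreal (dist2 M g (w i)))"
    by (rule Liminf_le_Limsup) simp
  also have "\<dots> \<le> ennreal e"
    using bound by (intro Limsup_bounded) (auto elim!: eventually_mono intro: ennreal_leI)
  finally have fin: "(\<integral>\<^sup>+ x. ennreal ((g x - v x) * (g x - v x)) \<partial>M) \<le> ennreal e" .
  show int: "integrable M (\<lambda>x. (g x - v x) * (g x - v x))"
    using fin vm by (intro integrableI_nonneg) (auto simp: top.not_eq_extremum intro: le_less_trans)
  have "ennreal (dist2 M g v) \<le> ennreal e"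
    using fin unfolding dist2_def ip_def by (subst nn_integral_eq_integral[symmetric]) (use int in auto)
  moreover obtain i where "dist2 M g (w i) \<le> e"
    using bound by (meson eventually_sequentially order_refl)
  then have "e \<ge> 0" using dist2_nonneg order_trans by blast
  ultimately show "dist2 M g v \<le> e" by simp
qed

lemma L2_limit_of_AE_limit:
  assumes us: "\<And>n. sq_int M (u n)" and C: "L2_Cauchy M u" and r: "strict_mono r"
    and vm: "v \<in> borel_measurable M" and lim: "AE x in M. (\<lambda>i. u (r i) x) \<longlonglongrightarrow> v x"
  shows "sq_int M v" and "(\<lambda>n. dist2 M (u n) v) \<longlonglongrightarrow> 0"
proof -
  have close: "\<exists>N. \<forall>n\<ge>N. integrable M (\<lambda>x. (u n x - v x) * (u n x - v x)) \<and> dist2 M (u n) v \<le> e"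
    if e: "e > 0" for e
  proof -
    obtain N where N: "\<forall>m\<ge>N. \<forall>n\<ge>N. dist2 M (u m) (u n) < e" using C e unfolding L2_Cauchy_def by auto
    have "eventually (\<lambda>i. dist2 M (u n) (u (r i)) \<le> e) sequentially" if "n \<ge> N" for n
      using N that seq_suble[OF r] by (intro eventually_sequentiallyI[of N]) (meson le_trans less_imp_le)
    then show ?thesis using dist2_AE_limit_le[OF us us vm lim] by blast
  qed
  then obtain N where "integrable M (\<lambda>x. (u N x - v x) * (u N x - v x))" by (meson order_refl zero_less_one)
  then have "sq_int M (\<lambda>x. u N x - v x)"
    using us vm unfolding sq_int_def by (simp add: power2_eq_square borel_measurable_diff)
  from sq_int_diff[OF us[of N] this] show "sq_int M v" by simp
  show "(\<lambda>n. dist2 M (u n) v) \<longlonglongrightarrow> 0"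
  proof (rule LIMSEQ_I)
    fix e :: real assume e: "0 < e"
    obtain N where N: "\<forall>n\<ge>N. dist2 M (u n) v \<le> e/2" using close[of "e/2"] e by auto
    have "norm (dist2 M (u n) v - 0) < e" if "n \<ge> N" for n
    proof -
      have "dist2 M (u n) v \<le> e/2" using N that by blast
      then show ?thesis using e dist2_nonneg[of M "u n" v] by simp
    qed
    then show "\<exists>N. \<forall>n\<ge>N. norm (dist2 M (u n) v - 0) < e" by blast
  qed
qed

lemma integral_tendsto_L2:
  assumes us: "\<And>n. sq_int M (u n)" and vs: "sq_int M v" and lim: "(\<lambda>n. dist2 M (u n) v) \<longlonglongrightarrow> 0"
  shows "(\<lambda>n. integral\<^sup>L M (u n)) \<longlonglongrightarrow> integral\<^sup>L M v"
proof -
  have "(\<lambda>n. integral\<^sup>L M (u n) - integral\<^sup>L M v) \<longlonglongrightarrow> 0"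
  proof (rule Lim_null_comparison)
    show "\<forall>\<^sub>F n in sequentially. norm (integral\<^sup>L M (u n) - integral\<^sup>L M v) \<le> sqrt (dist2 M (u n) v)"
    proof (intro always_eventually allI)
      fix n
      have "integral\<^sup>L M (u n) - integral\<^sup>L M v = integral\<^sup>L M (\<lambda>x. u n x - v x)"
        using sq_int_integrable[OF us] sq_int_integrable[OF vs] by simp
      then show "norm (integral\<^sup>L M (u n) - integral\<^sup>L M v) \<le> sqrt (dist2 M (u n) v)"
        using order_trans[OF abs_integral_le_nrm[OF sq_int_diff[OF us vs]]]
        unfolding nrm_def dist2_def by simp
    qed
    show "(\<lambda>n. sqrt (dist2 M (u n) v)) \<longlonglongrightarrow> 0" using tendsto_real_sqrt[OF lim] by simp
  qed
  then show ?thesis by (simp add: LIM_zero_iff)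
qed

lemma dist2_add_tendsto:
  assumes as: "\<And>n. sq_int M (a n)" and bs: "\<And>n. sq_int M (b n)"
    and a's: "sq_int M a'" and b's: "sq_int M b'"
    and a_lim: "(\<lambda>n. dist2 M (a n) a') \<longlonglongrightarrow> 0" and b_lim: "(\<lambda>n. dist2 M (b n) b') \<longlonglongrightarrow> 0"
  shows "(\<lambda>n. dist2 M (\<lambda>x. a n x + b n x) (\<lambda>x. a' x + b' x)) \<longlonglongrightarrow> 0"
proof (rule tendsto_sandwich[of "\<lambda>n. 0" _ _ "\<lambda>n. 2 * dist2 M (a n) a' + 2 * dist2 M (b n) b'"])
  have "dist2 M (\<lambda>x. a n x + b n x) (\<lambda>x. a' x + b' x)
        \<le> 2 * dist2 M (\<lambda>x. a n x + b n x) (\<lambda>x. a' x + b n x)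
          + 2 * dist2 M (\<lambda>x. a' x + b n x) (\<lambda>x. a' x + b' x)" for n
    using sq_int_add as bs a's b's by (intro dist2_triangle) auto
  moreover have "dist2 M (\<lambda>x. a n x + b n x) (\<lambda>x. a' x + b n x) = dist2 M (a n) a'"
    and "dist2 M (\<lambda>x. a' x + b n x) (\<lambda>x. a' x + b' x) = dist2 M (b n) b'" for n
    unfolding dist2_def by (simp_all add: algebra_simps)
  ultimately show "\<forall>\<^sub>F n in sequentially. dist2 M (\<lambda>x. a n x + b n x) (\<lambda>x. a' x + b' x)
                    \<le> 2 * dist2 M (a n) a' + 2 * dist2 M (b n) b'"
    by (intro always_eventually allI) simp
  show "(\<lambda>n. 2 * dist2 M (a n) a' + 2 * dist2 M (b n) b') \<longlonglongrightarrow> 0"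
    using tendsto_add[OF tendsto_mult_left[OF a_lim] tendsto_mult_left[OF b_lim], of 2 2] by simp
qed (auto intro: always_eventually dist2_nonneg)

lemma Hj_sq_int:
  assumes "X j \<in> borel_measurable M" "g \<in> Hj M q X j"
  shows "sq_int M g"
  using assms unfolding Hj_def sq_int_def by auto

lemma Hj_zero: "(\<lambda>x. 0) \<in> Hj M q X j"
  unfolding Hj_def by (intro CollectI exI[of _ "\<lambda>_. 0"]) auto

lemma Hj_subspace:
  assumes Xm: "X j \<in> borel_measurable M"
  shows "L2_subspace M (Hj M q X j)"
  unfolding L2_subspace_def
proof (intro conjI ballI allI)
  show "sq_int M g" if "g \<in> Hj M q X j" for g using Hj_sq_int[of X j, OF Xm that] .
  show "(\<lambda>x. 0) \<in> Hj M q X j" by (rule Hj_zero)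
  fix g assume g: "g \<in> Hj M q X j"
  then obtain g' where g': "g' \<in> borel_measurable borel" "g = (\<lambda>\<omega>. g' (X j \<omega>))"
      "integrable M (\<lambda>\<omega>. (g' (X j \<omega>))\<^sup>2)" "j < q \<longrightarrow> integral\<^sup>L M (\<lambda>\<omega>. g' (X j \<omega>)) = 0"
    unfolding Hj_def by auto
  show "(\<lambda>x. c * g x) \<in> Hj M q X j" for c
    unfolding Hj_def using g' by (intro CollectI exI[of _ "\<lambda>x. c * g' x"]) (auto simp: power_mult_distrib)
  fix h assume h: "h \<in> Hj M q X j"
  then obtain h' where h': "h' \<in> borel_measurable borel" "h = (\<lambda>\<omega>. h' (X j \<omega>))"
      "j < q \<longrightarrow> integral\<^sup>L M (\<lambda>\<omega>. h' (X j \<omega>)) = 0"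
    unfolding Hj_def by auto
  have "sq_int M (\<lambda>x. g x + h x)" using sq_int_add Hj_sq_int[of X j, OF Xm] g h by blast
  moreover have "integrable M g" "integrable M h" using sq_int_integrable Hj_sq_int[of X j, OF Xm] g h by blast+
  ultimately show "(\<lambda>x. g x + h x) \<in> Hj M q X j" unfolding Hj_def sq_int_def
    using g' h' by (intro CollectI exI[of _ "\<lambda>x. g' x + h' x"]) auto
qed

text \<open>Closedness of H_j: an L2 limit of functions of X_j is again a function of
  X_j (the pointwise limit along an a.e. convergent subsequence), and it stays
  centred because expectations are L2-continuous.\<close>
lemma Hj_complete:
  assumes Xm: "X j \<in> borel_measurable M"
  shows "L2_complete M (Hj M q X j)"
  unfolding L2_complete_def
proof (intro allI impI, elim conjE)
  fix u :: "nat \<Rightarrow> 'a \<Rightarrow> real" assume uH: "\<forall>n. u n \<in> Hj M q X j" and C: "L2_Cauchy M u"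
  have "\<forall>n. \<exists>h. h \<in> borel_measurable borel \<and> u n = (\<lambda>\<omega>. h (X j \<omega>))
                \<and> (j < q \<longrightarrow> integral\<^sup>L M (\<lambda>\<omega>. h (X j \<omega>)) = 0)"
    using uH unfolding Hj_def by blast
  then obtain hh where hh_m: "\<And>n. hh n \<in> borel_measurable borel"
      and u_eq: "\<And>n. u n = (\<lambda>\<omega>. hh n (X j \<omega>))"
      and u_centred: "\<And>n. j < q \<Longrightarrow> integral\<^sup>L M (\<lambda>\<omega>. hh n (X j \<omega>)) = 0"
    by metis
  have us: "sq_int M (u n)" for n using Hj_sq_int[of X j, OF Xm] uH by blast
  obtain r where r: "strict_mono r" and rC: "AE x in M. Cauchy (\<lambda>i. u (r i) x)"
    using L2_Cauchy_AE_subseq[OF us C] .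
  define hl where "hl = (\<lambda>y. lim (\<lambda>i. hh (r i) y))"
  have hl_m: "hl \<in> borel_measurable borel" unfolding hl_def using hh_m by measurable
  define v where "v = (\<lambda>\<omega>. hl (X j \<omega>))"
  have vm: "v \<in> borel_measurable M" unfolding v_def using hl_m Xm by measurable
  have "AE x in M. (\<lambda>i. u (r i) x) \<longlonglongrightarrow> v x"
    using rC
  proof (rule AE_mp, intro AE_I2 impI)
    fix x assume "Cauchy (\<lambda>i. u (r i) x)"
    then have "convergent (\<lambda>i. hh (r i) (X j x))" by (simp add: u_eq Cauchy_convergent_iff)
    then show "(\<lambda>i. u (r i) x) \<longlonglongrightarrow> v x" unfolding v_def hl_def u_eq
      by (simp add: convergent_LIMSEQ_iff)
  qed
  note v_limit = L2_limit_of_AE_limit[OF us C r vm this]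
  have "integral\<^sup>L M v = 0" if "j < q"
  proof (rule LIMSEQ_unique)
    show "(\<lambda>n. integral\<^sup>L M (u n)) \<longlonglongrightarrow> integral\<^sup>L M v"
      using integral_tendsto_L2[OF us v_limit] .
    show "(\<lambda>n. integral\<^sup>L M (u n)) \<longlonglongrightarrow> 0" using u_centred[OF that] by (simp add: u_eq)
  qed
  then have "v \<in> Hj M q X j"
    using hl_m v_limit(1) unfolding Hj_def sq_int_def v_def by (intro CollectI exI[of _ hl]) auto
  with v_limit(2) show "\<exists>v\<in>Hj M q X j. (\<lambda>n. dist2 M (u n) v) \<longlonglongrightarrow> 0" by blast
qed

end

section \<open>The block spaces H_J\<close>

lemma HJ_empty: "HJ M q X {} = {\<lambda>x. 0}"
  unfolding HJ_def by auto

lemma Hj_in_HJ: "b \<in> Hj M q X j \<Longrightarrow> b \<in> HJ M q X {j}"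
  unfolding HJ_def by (intro CollectI exI[of _ "\<lambda>_. b"]) auto

lemma HJ_insert:
  assumes "finite J" "j \<notin> J"
  shows "HJ M q X (insert j J) = {(\<lambda>x. a x + b x) | a b. a \<in> HJ M q X J \<and> b \<in> Hj M q X j}"
proof (intro equalityI subsetI)
  fix g assume "g \<in> HJ M q X (insert j J)"
  then obtain G where G: "\<forall>i\<in>insert j J. G i \<in> Hj M q X i" "g = (\<lambda>\<omega>. \<Sum>i\<in>insert j J. G i \<omega>)"
    unfolding HJ_def by auto
  have "(\<lambda>\<omega>. \<Sum>i\<in>J. G i \<omega>) \<in> HJ M q X J" unfolding HJ_def using G(1) by auto
  moreover have "g = (\<lambda>x. (\<Sum>i\<in>J. G i x) + G j x)" using G(2) assms by (simp add: add.commute)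
  ultimately show "g \<in> {(\<lambda>x. a x + b x) | a b. a \<in> HJ M q X J \<and> b \<in> Hj M q X j}"
    using G(1) by (intro CollectI exI[where x="\<lambda>\<omega>. \<Sum>i\<in>J. G i \<omega>"] exI[where x="G j"]) auto
next
  fix g assume "g \<in> {(\<lambda>x. a x + b x) | a b. a \<in> HJ M q X J \<and> b \<in> Hj M q X j}"
  then obtain a b where ab: "a \<in> HJ M q X J" "b \<in> Hj M q X j" "g = (\<lambda>x. a x + b x)" by blast
  obtain G where G: "\<forall>i\<in>J. G i \<in> Hj M q X i" "a = (\<lambda>\<omega>. \<Sum>i\<in>J. G i \<omega>)"
    using ab(1) unfolding HJ_def by auto
  have "\<forall>i\<in>insert j J. (G(j := b)) i \<in> Hj M q X i" using G(1) ab(2) by auto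
  moreover have "g = (\<lambda>\<omega>. \<Sum>i\<in>insert j J. (G(j := b)) i \<omega>)"
  proof
    fix x
    have "(\<Sum>i\<in>J. (G(j := b)) i x) = (\<Sum>i\<in>J. G i x)" using assms(2) by (intro sum.cong) auto
    then show "g x = (\<Sum>i\<in>insert j J. (G(j := b)) i x)" using assms ab(3) G(2) by (simp add: add.commute)
  qed
  ultimately show "g \<in> HJ M q X (insert j J)" unfolding HJ_def by blast
qed

lemma (in prob_space) HJ_mono:
  assumes "J' \<subseteq> J" "finite J"
  shows "HJ M q X J' \<subseteq> HJ M q X J"
proof
  fix g assume "g \<in> HJ M q X J'"
  then obtain G where G: "\<forall>j\<in>J'. G j \<in> Hj M q X j" "g = (\<lambda>\<omega>. \<Sum>j\<in>J'. G j \<omega>)"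
    unfolding HJ_def by auto
  define G' where "G' = (\<lambda>j. if j \<in> J' then G j else (\<lambda>x. 0))"
  have "\<forall>j\<in>J. G' j \<in> Hj M q X j" unfolding G'_def using G(1) Hj_zero by auto
  moreover have "g = (\<lambda>\<omega>. \<Sum>j\<in>J. G' j \<omega>)"
  proof
    fix \<omega>
    have "(\<Sum>j\<in>J. G' j \<omega>) = (\<Sum>j\<in>J. if j \<in> J' then G j \<omega> else 0)"
      unfolding G'_def by (intro sum.cong) auto
    also have "\<dots> = (\<Sum>j\<in>J'. G j \<omega>)"
      using sum.inter_restrict[OF assms(2), of "\<lambda>j. G j \<omega>" J'] Int_absorb1[OF assms(1)] by simp
    finally show "g \<omega> = (\<Sum>j\<in>J. G' j \<omega>)" using G(2) by simp
  qed
  ultimately show "g \<in> HJ M q X J" unfolding HJ_def by blast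
qed

lemma (in prob_space) HJ_subspace:
  assumes Xm: "\<forall>j\<in>J. X j \<in> borel_measurable M"
  shows "L2_subspace M (HJ M q X J)"
  unfolding L2_subspace_def
proof (intro conjI ballI allI)
  have Hj: "L2_subspace M (Hj M q X j)" if "j \<in> J" for j using Hj_subspace Xm that by blast
  show "sq_int M g" if "g \<in> HJ M q X J" for g
    using that Hj unfolding HJ_def by (auto intro!: sq_int_sum intro: L2_subspace_sq_int)
  show "(\<lambda>x. 0) \<in> HJ M q X J"
    unfolding HJ_def using Hj by (intro CollectI exI[of _ "\<lambda>_ _. 0"]) (auto intro: L2_subspace_zero)
  fix g assume "g \<in> HJ M q X J"
  then obtain G where G: "\<forall>j\<in>J. G j \<in> Hj M q X j" "g = (\<lambda>\<omega>. \<Sum>j\<in>J. G j \<omega>)"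
    unfolding HJ_def by auto
  show "(\<lambda>x. c * g x) \<in> HJ M q X J" for c
    unfolding HJ_def using G Hj
    by (intro CollectI exI[of _ "\<lambda>j x. c * G j x"]) (auto simp: sum_distrib_left intro: L2_subspace_scale)
  fix h assume "h \<in> HJ M q X J"
  then obtain H where H: "\<forall>j\<in>J. H j \<in> Hj M q X j" "h = (\<lambda>\<omega>. \<Sum>j\<in>J. H j \<omega>)"
    unfolding HJ_def by auto
  show "(\<lambda>x. g x + h x) \<in> HJ M q X J"
    unfolding HJ_def using G H Hj
    by (intro CollectI exI[of _ "\<lambda>j x. G j x + H j x"]) (auto simp: sum.distrib intro: L2_subspace_add)
qed

locale additive_design = prob_space M for M :: "'a measure" +
  fixes q qs :: nat and X :: "nat \<Rightarrow> 'a \<Rightarrow> real"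
  assumes X_measurable: "\<forall>j\<in>{1..q}. X j \<in> borel_measurable M"
begin

lemma block_subspace: "J \<subseteq> {1..q} \<Longrightarrow> L2_subspace M (HJ M q X J)"
  using X_measurable by (intro HJ_subspace) blast

lemma block_sq_int: "J \<subseteq> {1..q} \<Longrightarrow> g \<in> HJ M q X J \<Longrightarrow> sq_int M g"
  using block_subspace L2_subspace_sq_int by blast

text \<open>The defining property of rho_{q*}: |<a,b>| \<le> rho |a| |b| for a, b in
  disjoint admissible blocks (rho is replaced by max rho 0 so that the bound
  also covers the degenerate case of norm zero).\<close>
lemma rho_angle_bound:
  assumes AB: "A \<subseteq> {1..q}" "B \<subseteq> {1..q}" "A \<inter> B = {}" "card A \<le> qs" "card B \<le> qs"
    and ab: "a \<in> HJ M q X A" "b \<in> HJ M q X B"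
  shows "\<bar>ip M a b\<bar> \<le> max (rho M q X qs) 0 * nrm M a * nrm M b"
proof -
  define S where "S = {ip M h1 h2 / (nrm M h1 * nrm M h2) | J1 J2 h1 h2.
       J1 \<subseteq> {1..q} \<and> J2 \<subseteq> {1..q} \<and> J1 \<inter> J2 = {} \<and> card J1 \<le> qs \<and> card J2 \<le> qs \<and>
       h1 \<in> HJ M q X J1 \<and> h2 \<in> HJ M q X J2 \<and> nrm M h1 > 0 \<and> nrm M h2 > 0}"
  have rho_eq: "rho M q X qs = (if S = {} then 0 else Sup S)" unfolding rho_def S_def Let_def ..
  have as: "sq_int M a" and bs: "sq_int M b" using block_sq_int AB ab by auto
  have Sbdd: "bdd_above S" unfolding bdd_above_def
  proof (intro exI[of _ 1] ballI)
    fix x assume "x \<in> S"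
    then obtain J1 J2 h1 h2 where h: "J1 \<subseteq> {1..q}" "J2 \<subseteq> {1..q}" "h1 \<in> HJ M q X J1"
        "h2 \<in> HJ M q X J2" "nrm M h1 > 0" "nrm M h2 > 0" "x = ip M h1 h2 / (nrm M h1 * nrm M h2)"
      unfolding S_def by blast
    have "sq_int M h1" "sq_int M h2" using block_sq_int h(1-4) by auto
    then have "ip M h1 h2 \<le> nrm M h1 * nrm M h2" using abs_ip_le by fastforce
    then show "x \<le> 1" using h(5,6,7) by (simp add: divide_le_eq_1)
  qed
  show ?thesis
  proof (cases "nrm M a > 0 \<and> nrm M b > 0")
    case True
    have p: "nrm M a * nrm M b > 0" using True by simp
    have "ip M a b / (nrm M a * nrm M b) \<in> S" unfolding S_def using AB ab True by blast
    moreover have "ip M (\<lambda>x. - a x) b / (nrm M (\<lambda>x. - a x) * nrm M b) \<in> S"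
      unfolding S_def using AB ab True nrm_uminus[of M a]
        L2_subspace_scale[OF block_subspace[OF AB(1)] ab(1), of "-1"]
      by (intro CollectI exI[of _ A] exI[of _ B] exI[of _ "\<lambda>x. - a x"] exI[of _ b]) auto
    ultimately have "ip M a b / (nrm M a * nrm M b) \<le> rho M q X qs"
      and "- ip M a b / (nrm M a * nrm M b) \<le> rho M q X qs"
      using cSup_upper[OF _ Sbdd] rho_eq nrm_uminus[of M a] ip_scale_left[of M "-1" a b] by auto
    then have "ip M a b \<le> rho M q X qs * (nrm M a * nrm M b)"
      and "- ip M a b \<le> rho M q X qs * (nrm M a * nrm M b)"
      using p by (metis pos_divide_le_eq)+
    then have "\<bar>ip M a b\<bar> \<le> rho M q X qs * (nrm M a * nrm M b)" by (simp add: abs_le_iff)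
    also have "\<dots> \<le> max (rho M q X qs) 0 * (nrm M a * nrm M b)"
      using p by (intro mult_right_mono) auto
    finally show ?thesis by (simp add: mult.assoc)
  next
    case False
    then have "nrm M a = 0 \<or> nrm M b = 0" using nrm_nonneg[of M a] nrm_nonneg[of M b] by auto
    then show ?thesis using abs_ip_le[OF as bs] by auto
  qed
qed

lemma block_sum_lower:
  assumes AB: "A \<subseteq> {1..q}" "B \<subseteq> {1..q}" "A \<inter> B = {}" "card A \<le> qs" "card B \<le> qs"
    and ab: "a \<in> HJ M q X A" "b \<in> HJ M q X B"
  shows "(1 - max (rho M q X qs) 0) * (ip M a a + ip M b b) \<le> ip M (\<lambda>x. a x + b x) (\<lambda>x. a x + b x)"
proof -
  define r where "r = max (rho M q X qs) 0"
  have as: "sq_int M a" and bs: "sq_int M b" using block_sq_int AB ab by auto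
  have angle: "\<bar>ip M a b\<bar> \<le> r * nrm M a * nrm M b" unfolding r_def by (rule rho_angle_bound[OF AB ab])
  have "2 * (nrm M a * nrm M b) \<le> ip M a a + ip M b b"
    using two_mult_le_sum_squares[of "nrm M a" "nrm M b"] nrm_nonneg[of M a] nrm_nonneg[of M b]
    by (simp add: nrm_sq)
  then have "r * (2 * (nrm M a * nrm M b)) \<le> r * (ip M a a + ip M b b)"
    by (rule mult_left_mono) (simp add: r_def)
  then show ?thesis using angle ip_add_self[OF as bs] unfolding r_def[symmetric]
    by (simp add: algebra_simps)
qed

lemma block_insert_stable:
  assumes A: "A \<subseteq> {1..q}" "j \<in> {1..q}" "j \<notin> A" "card (insert j A) \<le> qs"
    and a: "a \<in> HJ M q X A" "a' \<in> HJ M q X A" and b: "b \<in> Hj M q X j" "b' \<in> Hj M q X j"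
  shows "(1 - max (rho M q X qs) 0) * (dist2 M a a' + dist2 M b b')
           \<le> dist2 M (\<lambda>x. a x + b x) (\<lambda>x. a' x + b' x)"
proof -
  have fA: "finite A" using A(1) finite_subset by blast
  have cardA: "card A \<le> qs" using A(4) card_insert_le[of A j] by linarith
  have Xj: "X j \<in> borel_measurable M" using X_measurable A(2) by blast
  have "(\<lambda>x. a x - a' x) \<in> HJ M q X A" using L2_subspace_diff[OF block_subspace[OF A(1)] a] .
  moreover have "(\<lambda>x. b x - b' x) \<in> HJ M q X {j}"
    using Hj_in_HJ[OF L2_subspace_diff[OF Hj_subspace[of X j, OF Xj] b]] .
  ultimately have "(1 - max (rho M q X qs) 0) * (dist2 M a a' + dist2 M b b')
      \<le> ip M (\<lambda>x. (a x - a' x) + (b x - b' x)) (\<lambda>x. (a x - a' x) + (b x - b' x))"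
    unfolding dist2_def using A fA by (intro block_sum_lower[OF A(1) _ _ cardA]) auto
  moreover have "(\<lambda>x. (a x - a' x) + (b x - b' x)) = (\<lambda>x. (a x + b x) - (a' x + b' x))" by auto
  ultimately show ?thesis unfolding dist2_def by simp
qed

text \<open>Adding one component to a complete admissible block keeps it complete:
  a Cauchy sequence a_n + b_n splits into Cauchy sequences (a_n) in H_A and
  (b_n) in H_j by block_insert_stable, and the limits add up.\<close>
lemma block_insert_complete:
  assumes rho1: "rho M q X qs < 1"
    and A: "A \<subseteq> {1..q}" "j \<in> {1..q}" "j \<notin> A" "card (insert j A) \<le> qs"
    and complete_A: "L2_complete M (HJ M q X A)"
  shows "L2_complete M (HJ M q X (insert j A))"
  unfolding L2_complete_def
proof (intro allI impI, elim conjE)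
  have fA: "finite A" using A(1) finite_subset by blast
  have Xj: "X j \<in> borel_measurable M" using X_measurable A(2) by blast
  have VA: "L2_subspace M (HJ M q X A)" and Vj: "L2_subspace M (Hj M q X j)"
    using block_subspace[OF A(1)] Hj_subspace[of X j, OF Xj] .
  define c where "c = 1 - max (rho M q X qs) 0"
  have c0: "c > 0" unfolding c_def using rho1 by simp
  fix u :: "nat \<Rightarrow> 'a \<Rightarrow> real"
  assume uH: "\<forall>n. u n \<in> HJ M q X (insert j A)" and C: "L2_Cauchy M u"
  obtain a b where aH: "\<And>n. a n \<in> HJ M q X A" and bH: "\<And>n. b n \<in> Hj M q X j"
      and u_eq: "\<And>n. u n = (\<lambda>x. a n x + b n x)"
    using uH unfolding HJ_insert[OF fA A(3)] by (simp add: Bex_def) metis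
  have as: "sq_int M (a n)" and bs: "sq_int M (b n)" for n
    using L2_subspace_sq_int VA Vj aH bH by blast+
  have "c * dist2 M (a m) (a n) \<le> dist2 M (u m) (u n)" "c * dist2 M (b m) (b n) \<le> dist2 M (u m) (u n)"
    for m n
  proof -
    have "0 \<le> c * dist2 M (a m) (a n)" "0 \<le> c * dist2 M (b m) (b n)"
      using mult_nonneg_nonneg[OF less_imp_le[OF c0] dist2_nonneg] by blast+
    then show "c * dist2 M (a m) (a n) \<le> dist2 M (u m) (u n)" "c * dist2 M (b m) (b n) \<le> dist2 M (u m) (u n)"
      using block_insert_stable[OF A aH[of m] aH[of n] bH[of m] bH[of n]] unfolding u_eq c_def
      by (simp_all add: distrib_left)
  qed
  then have "L2_Cauchy M a" and "L2_Cauchy M b" using L2_Cauchy_dominated[OF C c0] by blast+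
  then obtain a' b' where a'H: "a' \<in> HJ M q X A" and a'_lim: "(\<lambda>n. dist2 M (a n) a') \<longlonglongrightarrow> 0"
      and b'H: "b' \<in> Hj M q X j" and b'_lim: "(\<lambda>n. dist2 M (b n) b') \<longlonglongrightarrow> 0"
    using complete_A Hj_complete[of X j, OF Xj] aH bH unfolding L2_complete_def by meson
  have a's: "sq_int M a'" and b's: "sq_int M b'" using L2_subspace_sq_int VA Vj a'H b'H by blast+
  define w where "w = (\<lambda>x. a' x + b' x)"
  have wH: "w \<in> HJ M q X (insert j A)" unfolding HJ_insert[OF fA A(3)] w_def using a'H b'H by blast
  have "(\<lambda>n. dist2 M (u n) w) \<longlonglongrightarrow> 0"
    unfolding u_eq w_def using dist2_add_tendsto[OF as bs a's b's a'_lim b'_lim] .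
  with wH show "\<exists>v\<in>HJ M q X (insert j A). (\<lambda>n. dist2 M (u n) v) \<longlonglongrightarrow> 0" by blast
qed

lemma block_complete:
  assumes rho1: "rho M q X qs < 1" and J: "J \<subseteq> {1..q}" "card J \<le> qs"
  shows "L2_complete M (HJ M q X J)"
proof -
  have "finite J" using J(1) finite_subset by blast
  then show ?thesis using J
  proof (induction J rule: finite_induct)
    case empty
    show ?case unfolding L2_complete_def HJ_empty by (auto simp: dist2_def ip_def)
  next
    case (insert j A)
    then show ?case using block_insert_complete[OF rho1] by simp
  qed
qed

lemma proj_block:
  assumes rho1: "rho M q X qs < 1" and J: "J \<subseteq> {1..q}" "card J \<le> qs" and f: "sq_int M f"
  shows "proj M q X J f \<in> HJ M q X J"
    and "\<And>h. h \<in> HJ M q X J \<Longrightarrow> ip M (\<lambda>x. f x - proj M q X J f x) h = 0"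
proof -
  have "\<exists>g. g \<in> HJ M q X J \<and> (\<forall>h\<in>HJ M q X J. ip M (\<lambda>x. f x - g x) h = 0)"
    using orthogonal_projection_exists[OF block_subspace[OF J(1)] block_complete[OF rho1 J] f] by blast
  from someI_ex[OF this] show "proj M q X J f \<in> HJ M q X J"
    and "\<And>h. h \<in> HJ M q X J \<Longrightarrow> ip M (\<lambda>x. f x - proj M q X J f x) h = 0"
    unfolding proj_def by auto
qed

end

section \<open>The residual of a projection onto a block\<close>

context additive_design
begin

text \<open>If Q in H_J satisfies <Q,Q> = <u,Q> for some u in a disjoint block H_K, then
  |Q| \<le> rho |u| by the angle bound, and therefore <Q,u> \<le> rho^2 |u|^2.\<close>
lemma angle_self_bound:
  assumes KJ: "K \<subseteq> {1..q}" "J \<subseteq> {1..q}" "K \<inter> J = {}" "card K \<le> qs" "card J \<le> qs"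
    and uH: "u \<in> HJ M q X K" and QH: "Q \<in> HJ M q X J" and QQ: "ip M Q Q = ip M u Q"
  shows "ip M Q u \<le> (max (rho M q X qs) 0)\<^sup>2 * ip M u u"
proof -
  define r where "r = max (rho M q X qs) 0"
  have r0: "0 \<le> r" unfolding r_def by simp
  have angle: "\<bar>ip M u Q\<bar> \<le> r * nrm M u * nrm M Q"
    unfolding r_def by (rule rho_angle_bound[OF KJ uH QH])
  have nQ: "nrm M Q \<le> r * nrm M u"
  proof (cases "nrm M Q > 0")
    case True
    have "nrm M Q * nrm M Q = ip M Q Q" using nrm_sq[of M Q] by (simp add: power2_eq_square)
    also have "\<dots> \<le> r * nrm M u * nrm M Q" using QQ angle by simp
    finally show ?thesis using True by (simp add: mult.commute)
  next
    case False
    then show ?thesis using nrm_nonneg[of M Q] nrm_nonneg[of M u] r0 by simp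
  qed
  have "ip M Q u \<le> r * nrm M u * nrm M Q" using angle ip_sym[of M Q u] by simp
  also have "\<dots> \<le> r * nrm M u * (r * nrm M u)"
    using nQ r0 nrm_nonneg[of M u] by (intro mult_left_mono) auto
  also have "\<dots> = r\<^sup>2 * ip M u u" using nrm_sq[of M u] by (simp add: power2_eq_square)
  finally show ?thesis unfolding r_def .
qed

lemma residual_lower_bound:
  assumes rho1: "rho M q X qs < 1"
    and KJ: "K \<subseteq> {1..q}" "J \<subseteq> {1..q}" "K \<inter> J = {}" "card K \<le> qs" "card J \<le> qs"
    and uH: "u \<in> HJ M q X K" and cH: "c \<in> HJ M q X J" and zs: "sq_int M z" and zz: "ip M z z = 0"
    and f_eq: "f = (\<lambda>x. u x + c x + z x)"
  shows "(1 - (max (rho M q X qs) 0)\<^sup>2) * ip M u u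
           \<le> ip M (\<lambda>x. f x - proj M q X J f x) (\<lambda>x. f x - proj M q X J f x)"
proof -
  define P where "P = proj M q X J f"
  define Q where "Q = (\<lambda>x. P x - c x)"
  define e where "e = (\<lambda>x. f x - P x)"
  have us: "sq_int M u" and cs: "sq_int M c" using block_sq_int KJ uH cH by auto
  have uzs: "sq_int M (\<lambda>x. u x + z x)" using sq_int_add[OF us zs] .
  have fs: "sq_int M f" unfolding f_eq using sq_int_add[OF sq_int_add[OF us cs] zs] .
  have PH: "P \<in> HJ M q X J" and e_orth: "\<And>h. h \<in> HJ M q X J \<Longrightarrow> ip M e h = 0"
    using proj_block[OF rho1 KJ(2,5) fs] unfolding P_def e_def by auto
  have QH: "Q \<in> HJ M q X J" unfolding Q_def by (rule L2_subspace_diff[OF block_subspace[OF KJ(2)] PH cH])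
  have Qs: "sq_int M Q" using block_sq_int[OF KJ(2) QH] .
  have e_eq: "e = (\<lambda>x. (u x + z x) - Q x)" unfolding e_def Q_def f_eq by auto
  have es: "sq_int M e" unfolding e_eq using sq_int_diff[OF uzs Qs] .
  have zu: "ip M z u = 0" and zQ: "ip M z Q = 0" and ez: "ip M e z = 0"
    using ip_null_right[OF _ zs zz] us Qs es ip_sym[of M z] by auto
  have ee: "ip M e e = ip M u u - ip M Q u"
  proof -
    have "ip M e e = ip M e (\<lambda>x. u x + z x) - ip M e Q"
      by (subst (2) e_eq) (rule ip_diff_right[OF uzs Qs es])
    also have "\<dots> = ip M e u" using ip_add_right[OF us zs es] ez e_orth[OF QH] by simp
    also have "\<dots> = ip M u u - ip M Q u"
      unfolding e_eq using ip_diff_left[OF uzs Qs us] ip_add_left[OF us zs us] zu by simp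
    finally show ?thesis .
  qed
  have "ip M Q Q = ip M u Q"
    using e_orth[OF QH] ip_diff_left[OF uzs Qs Qs] ip_add_left[OF us zs Qs] zQ unfolding e_eq by simp
  then have "ip M Q u \<le> (max (rho M q X qs) 0)\<^sup>2 * ip M u u"
    by (rule angle_self_bound[OF KJ uH QH])
  then have "(1 - (max (rho M q X qs) 0)\<^sup>2) * ip M u u \<le> ip M u u - ip M Q u"
    by (simp add: algebra_simps)
  then show ?thesis using ee unfolding e_def P_def by linarith
qed

end

lemma kappa_bounds:
  assumes K: "K \<subseteq> J0 M q X fj"
  shows "0 \<le> kappa M q X fj (card K)"
    and "kappa M q X fj (card K) \<le> (nrm M (\<lambda>\<omega>. \<Sum>j\<in>K. fj j (X j \<omega>)))\<^sup>2"
proof -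
  define S where "S = {(nrm M (\<lambda>\<omega>. \<Sum>j\<in>J'. fj j (X j \<omega>)))\<^sup>2 | J'. J' \<subseteq> J0 M q X fj \<and> card J' = card K}"
  have kappa_eq: "kappa M q X fj (card K) = Min S" unfolding kappa_def S_def ..
  have "finite (J0 M q X fj)" unfolding J0_def by simp
  then have "finite {J'. J' \<subseteq> J0 M q X fj \<and> card J' = card K}" by simp
  moreover have "S = (\<lambda>J'. (nrm M (\<lambda>\<omega>. \<Sum>j\<in>J'. fj j (X j \<omega>)))\<^sup>2) ` {J'. J' \<subseteq> J0 M q X fj \<and> card J' = card K}"
    unfolding S_def by blast
  ultimately have fin: "finite S" by simp
  have mem: "(nrm M (\<lambda>\<omega>. \<Sum>j\<in>K. fj j (X j \<omega>)))\<^sup>2 \<in> S" unfolding S_def using K by blast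
  show "kappa M q X fj (card K) \<le> (nrm M (\<lambda>\<omega>. \<Sum>j\<in>K. fj j (X j \<omega>)))\<^sup>2"
    unfolding kappa_eq using Min_le[OF fin mem] .
  have "Min S \<in> S" using Min_in[OF fin] mem by blast
  then show "0 \<le> kappa M q X fj (card K)" unfolding kappa_eq S_def by auto
qed

locale additive_model = additive_design +
  fixes fj :: "nat \<Rightarrow> real \<Rightarrow> real" and f :: "'a \<Rightarrow> real"
  assumes f_eq: "f = (\<lambda>\<omega>. \<Sum>j\<in>{1..q}. fj j (X j \<omega>))"
    and fj_sq_int: "\<forall>j\<in>{1..q}. fj j \<in> borel_measurable borel \<and> integrable M (\<lambda>\<omega>. (fj j (X j \<omega>))\<^sup>2)"
    and fj_centred: "\<forall>j\<in>{1..q}. j < q \<longrightarrow> integral\<^sup>L M (\<lambda>\<omega>. fj j (X j \<omega>)) = 0"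
    and rho_lt_1: "rho M q X qs < 1"
    and card_J0: "card (J0 M q X fj) \<le> qs"
begin

abbreviation signal :: "nat set \<Rightarrow> 'a \<Rightarrow> real" where
  "signal K \<equiv> (\<lambda>\<omega>. \<Sum>j\<in>K. fj j (X j \<omega>))"

lemma J0_sub: "J0 M q X fj \<subseteq> {1..q}"
  unfolding J0_def by auto

lemma J0_finite: "finite (J0 M q X fj)"
  using J0_sub finite_subset by blast

lemma signal_block:
  assumes "K \<subseteq> {1..q}"
  shows "signal K \<in> HJ M q X K"
proof -
  have "(\<lambda>\<omega>. fj j (X j \<omega>)) \<in> Hj M q X j" if "j \<in> K" for j
    using that assms X_measurable fj_sq_int fj_centred unfolding Hj_def
    by (intro CollectI exI[of _ "fj j"]) auto
  then show ?thesis unfolding HJ_def by (intro CollectI exI[of _ "\<lambda>j \<omega>. fj j (X j \<omega>)"]) auto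
qed

lemma signal_sq_int: "K \<subseteq> {1..q} \<Longrightarrow> sq_int M (signal K)"
  using block_sq_int[OF _ signal_block] by blast

lemma signal_outside_J0_null: "ip M (signal ({1..q} - J0 M q X fj)) (signal ({1..q} - J0 M q X fj)) = 0"
proof (rule ip_sum_null)
  fix j assume j: "j \<in> {1..q} - J0 M q X fj"
  then show "sq_int M (\<lambda>\<omega>. fj j (X j \<omega>))" using signal_sq_int[of "{j}"] by simp
  from j have "\<not> nrm M (\<lambda>\<omega>. fj j (X j \<omega>)) > 0" unfolding J0_def by auto
  then show "ip M (\<lambda>\<omega>. fj j (X j \<omega>)) (\<lambda>\<omega>. fj j (X j \<omega>)) = 0"
    using nrm_nonneg[of M "\<lambda>\<omega>. fj j (X j \<omega>)"] nrm_sq[of M "\<lambda>\<omega>. fj j (X j \<omega>)"] by simp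
qed simp

lemma f_split:
  assumes "finite J"
  shows "f = (\<lambda>\<omega>. signal (J0 M q X fj - J) \<omega> + signal (J0 M q X fj \<inter> J) \<omega>
                  + signal ({1..q} - J0 M q X fj) \<omega>)"
proof
  fix \<omega>
  have "signal {1..q} \<omega> = signal (J0 M q X fj) \<omega> + signal ({1..q} - J0 M q X fj) \<omega>"
    using sum.subset_diff[OF J0_sub, of "\<lambda>j. fj j (X j \<omega>)"] by (simp add: add.commute)
  moreover have "signal (J0 M q X fj) \<omega> = signal (J0 M q X fj - J) \<omega> + signal (J0 M q X fj \<inter> J) \<omega>"
    using sum.Int_Diff[OF J0_finite, of _ J] by (simp add: add.commute)
  ultimately show "f \<omega> = signal (J0 M q X fj - J) \<omega> + signal (J0 M q X fj \<inter> J) \<omega>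
                  + signal ({1..q} - J0 M q X fj) \<omega>"
    unfolding f_eq by simp
qed

lemma f_sq_int: "sq_int M f"
  unfolding f_eq by (rule signal_sq_int) simp

text \<open>Since f agrees with an element of H_{J0} up to a null function, the
  projection onto H_{J0} preserves the norm of f.\<close>
lemma proj_J0_norm: "(nrm M (proj M q X (J0 M q X fj) f))\<^sup>2 = ip M f f"
proof -
  define P where "P = proj M q X (J0 M q X fj) f"
  define z where "z = signal ({1..q} - J0 M q X fj)"
  have PH: "P \<in> HJ M q X (J0 M q X fj)"
    and orth: "\<And>h. h \<in> HJ M q X (J0 M q X fj) \<Longrightarrow> ip M (\<lambda>x. f x - P x) h = 0"
    using proj_block[OF rho_lt_1 J0_sub card_J0 f_sq_int] unfolding P_def by auto
  have Ps: "sq_int M P" using block_sq_int[OF J0_sub PH] .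
  have zs: "sq_int M z" unfolding z_def by (rule signal_sq_int) auto
  have es: "sq_int M (\<lambda>x. f x - P x)" using sq_int_diff[OF f_sq_int Ps] .
  define s0 where "s0 = signal (J0 M q X fj)"
  have s0s: "sq_int M s0" unfolding s0_def using signal_sq_int[OF J0_sub] .
  have f_eq0: "f = (\<lambda>x. s0 x + z x)"
    using f_split[of "{}"] unfolding z_def s0_def by simp
  have "ip M (\<lambda>x. f x - P x) f = ip M (\<lambda>x. f x - P x) s0 + ip M (\<lambda>x. f x - P x) z"
    using ip_add_right[OF s0s zs es] unfolding f_eq0[symmetric] .
  also have "\<dots> = 0"
    using orth[OF signal_block[OF J0_sub, folded s0_def]]
      ip_null_right[OF es zs signal_outside_J0_null[folded z_def]]
    by simp
  finally have "ip M (\<lambda>x. f x - P x) (\<lambda>x. f x - P x) = 0"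
    using ip_diff_right[OF f_sq_int Ps es] orth[OF PH] by simp
  then show ?thesis
    using pythagoras[OF f_sq_int Ps orth[OF PH]] nrm_sq[of M P] unfolding P_def by simp
qed

theorem projection_gap:
  assumes J: "J \<subseteq> {1..q}" "card J \<le> qs"
  shows "(nrm M (proj M q X (J0 M q X fj) f))\<^sup>2 - (nrm M (proj M q X J f))\<^sup>2
           = (nrm M (\<lambda>\<omega>. f \<omega> - proj M q X J f \<omega>))\<^sup>2"
    and "(nrm M (\<lambda>\<omega>. f \<omega> - proj M q X J f \<omega>))\<^sup>2
           \<ge> (1 - (rho M q X qs)\<^sup>2) * kappa M q X fj (card (J0 M q X fj - J))"
proof -
  let ?P = "proj M q X J f" and ?K = "J0 M q X fj - J"
  have PH: "?P \<in> HJ M q X J" and orth: "ip M (\<lambda>x. f x - ?P x) ?P = 0"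
    using proj_block[OF rho_lt_1 J f_sq_int] by auto
  have Ps: "sq_int M ?P" using block_sq_int[OF J(1) PH] .
  show "(nrm M (proj M q X (J0 M q X fj) f))\<^sup>2 - (nrm M ?P)\<^sup>2 = (nrm M (\<lambda>\<omega>. f \<omega> - ?P \<omega>))\<^sup>2"
    using proj_J0_norm pythagoras[OF f_sq_int Ps orth] by (simp add: nrm_sq)
  have "card ?K \<le> card (J0 M q X fj)" by (rule card_mono[OF J0_finite Diff_subset])
  then have K: "?K \<subseteq> {1..q}" "card ?K \<le> qs" using J0_sub card_J0 by auto
  define r where "r = max (rho M q X qs) 0"
  have r2: "r\<^sup>2 \<le> (rho M q X qs)\<^sup>2" "r\<^sup>2 \<le> 1"
    using rho_lt_1 unfolding r_def by (auto simp: max_def power_le_one)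
  have "(1 - (rho M q X qs)\<^sup>2) * kappa M q X fj (card ?K) \<le> (1 - r\<^sup>2) * kappa M q X fj (card ?K)"
    using kappa_bounds(1)[OF Diff_subset] r2(1) by (intro mult_right_mono) simp_all
  also have "\<dots> \<le> (1 - r\<^sup>2) * ip M (signal ?K) (signal ?K)"
    using kappa_bounds(2)[OF Diff_subset] r2(2) unfolding nrm_sq by (intro mult_left_mono) simp_all
  also have "\<dots> \<le> (nrm M (\<lambda>\<omega>. f \<omega> - ?P \<omega>))\<^sup>2"
  proof -
    have fJ: "finite J" using J(1) finite_subset by blast
    have "signal (J0 M q X fj \<inter> J) \<in> HJ M q X (J0 M q X fj \<inter> J)"
      using J0_sub by (intro signal_block) auto
    then have cH: "signal (J0 M q X fj \<inter> J) \<in> HJ M q X J"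
      using HJ_mono[of "J0 M q X fj \<inter> J" J] fJ by blast
    have zs: "sq_int M (signal ({1..q} - J0 M q X fj))" by (rule signal_sq_int) auto
    have disj: "?K \<inter> J = {}" by blast
    show ?thesis
      using residual_lower_bound[OF rho_lt_1 K(1) J(1) disj K(2) J(2) signal_block[OF K(1)] cH zs
          signal_outside_J0_null f_split[OF fJ]]
      unfolding nrm_sq r_def .
  qed
  finally show "(nrm M (\<lambda>\<omega>. f \<omega> - ?P \<omega>))\<^sup>2 \<ge> (1 - (rho M q X qs)\<^sup>2) * kappa M q X fj (card ?K)" .
qed

end

theorem proposition1:
  fixes M :: "'a measure" and q qs :: nat and X :: "nat \<Rightarrow> 'a \<Rightarrow> real"
    and fj :: "nat \<Rightarrow> real \<Rightarrow> real" and J :: "nat set"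
  defines "f \<equiv> (\<lambda>\<omega>. \<Sum>j\<in>{1..q}. fj j (X j \<omega>))"
  assumes "prob_space M"
    and "q \<ge> 1"
    and "\<forall>j\<in>{1..q}. X j \<in> borel_measurable M"
    and "\<forall>j\<in>{1..q}. fj j \<in> borel_measurable borel \<and> integrable M (\<lambda>\<omega>. (fj j (X j \<omega>))\<^sup>2)"
    and "\<forall>j\<in>{1..q}. j < q \<longrightarrow> integral\<^sup>L M (\<lambda>\<omega>. fj j (X j \<omega>)) = 0"
    and "card (J0 M q X fj) \<le> qs"
    and "rho M q X qs < 1"
    and "J \<subseteq> {1..q}" and "card J \<le> qs"
    and "J0 M q X fj - J \<noteq> {}"
  shows "(nrm M (proj M q X (J0 M q X fj) f))\<^sup>2 - (nrm M (proj M q X J f))\<^sup>2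
           = (nrm M (\<lambda>\<omega>. f \<omega> - proj M q X J f \<omega>))\<^sup>2
       \<and> (nrm M (\<lambda>\<omega>. f \<omega> - proj M q X J f \<omega>))\<^sup>2
           \<ge> (1 - (rho M q X qs)\<^sup>2) * kappa M q X fj (card (J0 M q X fj - J))"
proof -
  have "additive_model M q qs X fj f"
    by (intro additive_model.intro additive_design.intro additive_design_axioms.intro
        additive_model_axioms.intro assms(2,4-8)) (simp add: f_def)
  then interpret additive_model M q qs X fj f .
  show ?thesis using projection_gap[OF assms(9,10)] by (rule conjI)
qed

end
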